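(* Let $\mu>\nu>0$ and let $(Y_i)_{i\ge0},(e_i)_{i\ge0}$ be sequences with values in $[0,1]$, with $e_0=1/2$, satisfying the decoy-state constraints (DS) for some reals $Q_\mu,Q_\nu,E_\mu,E_\nu$. Let $e_t\in(0,1/2]$ and set $a=1+\log_2(1-e_t)$, $b=\log_2(1-e_t)-\log_2 e_t$. Assume $$(a-b)\frac{\nu}{\mu+\nu}+(b-2a)\ge 0 .$$ Then, with $C_1=\mu^2e^{\nu}Q_\nu-\nu^2e^{\mu}Q_\mu$ and $C_2=\mu^2e^{\nu}E_\nu Q_\nu-\nu^2e^{\mu}E_\mu Q_\mu$, $$Y_1\big[1-h(e_1)\big]\ \ge\ \frac{1}{\mu\nu(\mu-\nu)}\Big[aC_1-bC_2+(a-b)\,\nu\big(\nu e^{\mu}E_\mu Q_\mu-\mu e^{\nu}E_\nu Q_\nu\big)\Big].$$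
   Context: $h(x)=-x\log_2 x-(1-x)\log_2(1-x)$ is the binary entropy function on $[0,1]$ (with $0\log_2 0=0$). For reals $\mu>\nu>0$, the decoy-state constraints (DS) on sequences $(Y_i)_{i\ge0},(e_i)_{i\ge0}$ with values in $[0,1]$ are $$Q_\mu=\sum_{i=0}^\infty \frac{\mu^i e^{-\mu}}{i!}Y_i,\quad Q_\nu=\sum_{i=0}^\infty \frac{\nu^i e^{-\nu}}{i!}Y_i,\quad E_\mu Q_\mu=\sum_{i=0}^\infty \frac{\mu^i e^{-\mu}}{i!}Y_ie_i,\quad E_\nu Q_\nu=\sum_{i=0}^\infty \frac{\nu^i e^{-\nu}}{i!}Y_ie_i.$$ *)

theory Defs
  imports "HOL-Analysis.Analysis"
begin

definition bin_entropy :: "real \<Rightarrow> real" where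
  "bin_entropy x =
     (if x = 0 then 0 else - x * log 2 x) +
     (if x = 1 then 0 else - (1 - x) * log 2 (1 - x))"

definition poisson_w :: "real \<Rightarrow> nat \<Rightarrow> real" where
  "poisson_w m i = m ^ i * exp (- m) / fact i"

end

theory Submission
  imports Defs
begin

text \<open>Multiplying the four decoy-state series by e^\<mu> resp. e^\<nu> and combining them
  linearly gives a series whose i-th term is Y_i/i! times a coefficient that is
  \<mu>\<nu>(\<mu>-\<nu>)(a - b e_1) for i = 1 and nonpositive otherwise: for i = 0 this is the
  hypothesis on a and b (using e_0 = 1/2), for i \<ge> 2 it follows from \<nu>^i \<mu>^2 \<le> \<mu>^i \<nu>^2,
  a \<ge> 0 and a \<le> b.  Hence the combination bounds Y_1 (a - b e_1) from below, and
  a - b x is the tangent line of the concave function 1 - h at x = e_t, so it lies below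
  1 - h(x).\<close>

lemma xlnx_ge_tangent:
  fixes x p :: real
  assumes "0 \<le> x" "0 < p"
  shows "x * ln p + x - p \<le> (if x = 0 then 0 else x * ln x)"
proof (cases "x = 0")
  case False
  with assms have "x > 0" by simp
  have "ln p - ln x \<le> p / x - 1"
    using ln_le_minus_one[of "p / x"] ln_div[of p x] \<open>x > 0\<close> assms by simp
  then have "x * (ln p - ln x) \<le> x * (p / x - 1)"
    using \<open>x > 0\<close> by (intro mult_left_mono) auto
  with \<open>x > 0\<close> show ?thesis by (simp add: algebra_simps)
qed (use assms in simp)

lemma one_minus_bin_entropy_ge_tangent:
  fixes x et :: real
  assumes "0 \<le> x" "x \<le> 1" "0 < et" "et < 1"
  shows "(1 + log 2 (1 - et)) - (log 2 (1 - et) - log 2 et) * x \<le> 1 - bin_entropy x"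
proof -
  have "bin_entropy x * ln 2
      = - (if x = 0 then 0 else x * ln x) - (if 1 - x = 0 then 0 else (1 - x) * ln (1 - x))"
    unfolding bin_entropy_def log_def by (auto simp: field_simps)
  also have "\<dots> \<le> - x * ln et - (1 - x) * ln (1 - et)"
    using xlnx_ge_tangent[of x et] xlnx_ge_tangent[of "1 - x" "1 - et"] assms by linarith
  finally have "bin_entropy x \<le> (- x * ln et - (1 - x) * ln (1 - et)) / ln 2"
    by (simp add: pos_le_divide_eq)
  moreover have "(1 + log 2 (1 - et)) - (log 2 (1 - et) - log 2 et) * x
      = 1 - (- x * ln et - (1 - x) * ln (1 - et)) / ln 2"
    unfolding log_def by (simp add: field_simps)
  ultimately show ?thesis by linarith
qed

lemma sums_poisson_w_rescale:
  assumes "(\<lambda>i. poisson_w m i * f i) sums S"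
  shows "(\<lambda>i. m ^ i / fact i * f i) sums (exp m * S)"
proof -
  have "(\<lambda>i. exp m * (poisson_w m i * f i)) = (\<lambda>i. m ^ i / fact i * f i)"
    by (simp add: poisson_w_def exp_minus field_simps)
  with sums_mult[OF assms, of "exp m"] show ?thesis by simp
qed

definition decoy_coeff :: "real \<Rightarrow> real \<Rightarrow> real \<Rightarrow> real \<Rightarrow> nat \<Rightarrow> real \<Rightarrow> real" where
  "decoy_coeff \<mu> \<nu> a b i x =
     a * (\<mu>\<^sup>2 * \<nu> ^ i - \<nu>\<^sup>2 * \<mu> ^ i) - b * (\<mu>\<^sup>2 * \<nu> ^ i - \<nu>\<^sup>2 * \<mu> ^ i) * x
     + (a - b) * \<nu> * (\<nu> * \<mu> ^ i - \<mu> * \<nu> ^ i) * x"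

lemma decoy_coeff_one: "decoy_coeff \<mu> \<nu> a b 1 x = \<mu> * \<nu> * (\<mu> - \<nu>) * (a - b * x)"
  unfolding decoy_coeff_def by (simp add: power2_eq_square algebra_simps)

lemma decoy_coeff_zero_nonpos:
  fixes \<mu> \<nu> a b :: real
  assumes "0 < \<nu>" "\<nu> < \<mu>" and "(a - b) * (\<nu> / (\<mu> + \<nu>)) + (b - 2 * a) \<ge> 0"
  shows "decoy_coeff \<mu> \<nu> a b 0 (1/2) \<le> 0"
proof -
  have "decoy_coeff \<mu> \<nu> a b 0 (1/2)
      = - ((\<mu> - \<nu>) * (\<mu> + \<nu>) / 2) * ((a - b) * (\<nu> / (\<mu> + \<nu>)) + (b - 2 * a))"
    unfolding decoy_coeff_def using assms by (simp add: field_simps power2_eq_square)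
  also have "\<dots> \<le> 0"
    using assms by (intro mult_nonpos_nonneg) auto
  finally show ?thesis .
qed

lemma decoy_coeff_nonpos:
  fixes \<mu> \<nu> a b x :: real
  assumes "0 < \<nu>" "\<nu> < \<mu>" "0 \<le> a" "a \<le> b" "0 \<le> x" "x \<le> 1" "2 \<le> i"
  shows "decoy_coeff \<mu> \<nu> a b i x \<le> 0"
proof -
  obtain k where i: "i = k + 2" using \<open>2 \<le> i\<close> by (metis add.commute le_Suc_ex)
  have "(\<mu>\<^sup>2 * \<nu>\<^sup>2) * \<nu> ^ k \<le> (\<mu>\<^sup>2 * \<nu>\<^sup>2) * \<mu> ^ k"
    using assms by (intro mult_left_mono power_mono) auto
  then have P: "\<mu>\<^sup>2 * \<nu> ^ i - \<nu>\<^sup>2 * \<mu> ^ i \<le> 0"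
    unfolding i by (simp add: power_add power2_eq_square algebra_simps)
  have "decoy_coeff \<mu> \<nu> a b i x
      = (1 - x) * (a * (\<mu>\<^sup>2 * \<nu> ^ i - \<nu>\<^sup>2 * \<mu> ^ i)) + x * ((a - b) * (\<mu> * (\<mu> - \<nu>) * \<nu> ^ i))"
    unfolding decoy_coeff_def by (simp add: field_simps power2_eq_square)
  also have "\<dots> \<le> 0"
    using assms P
    by (intro add_nonpos_nonpos mult_nonneg_nonpos mult_nonpos_nonneg) auto
  finally show ?thesis .
qed

lemma decoy_state_bound:
  fixes \<mu> \<nu> a b Q\<mu> Q\<nu> E\<mu> E\<nu> :: real and Y e :: "nat \<Rightarrow> real"
  assumes "0 < \<nu>" "\<nu> < \<mu>" "0 \<le> a" "a \<le> b"
    and hcond: "(a - b) * (\<nu> / (\<mu> + \<nu>)) + (b - 2 * a) \<ge> 0"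
    and hY: "\<And>i. 0 \<le> Y i" and he: "\<And>i. 0 \<le> e i \<and> e i \<le> 1" and he0: "e 0 = 1/2"
    and DS1: "(\<lambda>i. poisson_w \<mu> i * Y i) sums Q\<mu>"
    and DS2: "(\<lambda>i. poisson_w \<nu> i * Y i) sums Q\<nu>"
    and DS3: "(\<lambda>i. poisson_w \<mu> i * Y i * e i) sums (E\<mu> * Q\<mu>)"
    and DS4: "(\<lambda>i. poisson_w \<nu> i * Y i * e i) sums (E\<nu> * Q\<nu>)"
  shows "(a * (\<mu>^2 * exp \<nu> * Q\<nu> - \<nu>^2 * exp \<mu> * Q\<mu>)
           - b * (\<mu>^2 * exp \<nu> * E\<nu> * Q\<nu> - \<nu>^2 * exp \<mu> * E\<mu> * Q\<mu>)
           + (a - b) * \<nu> * (\<nu> * exp \<mu> * E\<mu> * Q\<mu> - \<mu> * exp \<nu> * E\<nu> * Q\<nu>))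
           / (\<mu> * \<nu> * (\<mu> - \<nu>)) \<le> (a - b * e 1) * Y 1"
    (is "?N / ?D \<le> _")
proof -
  define g where "g i = decoy_coeff \<mu> \<nu> a b i (e i) * (Y i / fact i)" for i
  note sA = sums_poisson_w_rescale[OF DS1]
  note sB = sums_poisson_w_rescale[OF DS2]
  note sAe = sums_poisson_w_rescale[of \<mu> "\<lambda>i. Y i * e i", OF DS3[unfolded mult.assoc]]
  note sBe = sums_poisson_w_rescale[of \<nu> "\<lambda>i. Y i * e i", OF DS4[unfolded mult.assoc]]
  have "g = (\<lambda>i. a * (\<mu>\<^sup>2 * (\<nu> ^ i / fact i * Y i) - \<nu>\<^sup>2 * (\<mu> ^ i / fact i * Y i))
          - b * (\<mu>\<^sup>2 * (\<nu> ^ i / fact i * (Y i * e i)) - \<nu>\<^sup>2 * (\<mu> ^ i / fact i * (Y i * e i)))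
          + (a - b) * \<nu> * (\<nu> * (\<mu> ^ i / fact i * (Y i * e i)) - \<mu> * (\<nu> ^ i / fact i * (Y i * e i))))"
    by (rule ext) (simp add: g_def decoy_coeff_def field_simps)
  also have "\<dots> sums (a * (\<mu>\<^sup>2 * (exp \<nu> * Q\<nu>) - \<nu>\<^sup>2 * (exp \<mu> * Q\<mu>))
          - b * (\<mu>\<^sup>2 * (exp \<nu> * (E\<nu> * Q\<nu>)) - \<nu>\<^sup>2 * (exp \<mu> * (E\<mu> * Q\<mu>)))
          + (a - b) * \<nu> * (\<nu> * (exp \<mu> * (E\<mu> * Q\<mu>)) - \<mu> * (exp \<nu> * (E\<nu> * Q\<nu>))))"
    by (intro sums_add sums_diff sums_mult sA sB sAe sBe)
  finally have "g sums ?N"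
    by (simp add: algebra_simps)
  have g_nonpos: "g i \<le> 0" if "i \<noteq> 1" for i
  proof -
    have "decoy_coeff \<mu> \<nu> a b i (e i) \<le> 0"
    proof (cases "i = 0")
      case True
      then show ?thesis using decoy_coeff_zero_nonpos[OF assms(1,2) hcond] by (simp only: he0)
    next
      case False
      with that show ?thesis using decoy_coeff_nonpos he[of i] assms by simp
    qed
    then show ?thesis unfolding g_def using hY[of i] by (intro mult_nonpos_nonneg) auto
  qed
  have "?N \<le> g 1"
    by (rule sums_le[OF _ \<open>g sums ?N\<close> sums_single[of 1 g]]) (simp add: g_nonpos)
  also have "g 1 = ?D * ((a - b * e 1) * Y 1)"
    unfolding g_def decoy_coeff_one by simp
  finally show ?thesis
    using assms by (simp add: pos_divide_le_eq mult.commute)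
qed

theorem mainTheorem4:
  fixes \<mu> \<nu> Q\<mu> Q\<nu> E\<mu> E\<nu> et :: real
    and Y e :: "nat \<Rightarrow> real"
  assumes hmn: "\<mu> > \<nu>" and hn: "\<nu> > 0"
    and hY: "\<And>i. 0 \<le> Y i \<and> Y i \<le> 1"
    and he: "\<And>i. 0 \<le> e i \<and> e i \<le> 1"
    and he0: "e 0 = 1/2"
    and DS1: "(\<lambda>i. poisson_w \<mu> i * Y i) sums Q\<mu>"
    and DS2: "(\<lambda>i. poisson_w \<nu> i * Y i) sums Q\<nu>"
    and DS3: "(\<lambda>i. poisson_w \<mu> i * Y i * e i) sums (E\<mu> * Q\<mu>)"
    and DS4: "(\<lambda>i. poisson_w \<nu> i * Y i * e i) sums (E\<nu> * Q\<nu>)"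
    and het: "0 < et" "et \<le> 1/2"
    and hcond: "(1 + log 2 (1 - et) - (log 2 (1 - et) - log 2 et)) * (\<nu> / (\<mu> + \<nu>))
               + ((log 2 (1 - et) - log 2 et) - 2 * (1 + log 2 (1 - et))) \<ge> 0"
  shows "let a = 1 + log 2 (1 - et);
             b = log 2 (1 - et) - log 2 et;
             C1 = \<mu>^2 * exp \<nu> * Q\<nu> - \<nu>^2 * exp \<mu> * Q\<mu>;
             C2 = \<mu>^2 * exp \<nu> * E\<nu> * Q\<nu> - \<nu>^2 * exp \<mu> * E\<mu> * Q\<mu>
         in Y 1 * (1 - bin_entropy (e 1)) \<ge>
            (a * C1 - b * C2 + (a - b) * \<nu> * (\<nu> * exp \<mu> * E\<mu> * Q\<mu> - \<mu> * exp \<nu> * E\<nu> * Q\<nu>))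
              / (\<mu> * \<nu> * (\<mu> - \<nu>))"
proof -
  define a where "a = 1 + log 2 (1 - et)"
  define b where "b = log 2 (1 - et) - log 2 et"
  have log_half: "log 2 (1/2 :: real) = -1" by (simp add: log_divide)
  have "log 2 (1/2) \<le> log 2 (1 - et)" "log 2 et \<le> log 2 (1/2)"
    using het by (subst log_le_cancel_iff; simp)+
  then have "0 \<le> a" "a \<le> b" using log_half unfolding a_def b_def by linarith+
  have "a - b * e 1 \<le> 1 - bin_entropy (e 1)"
    using one_minus_bin_entropy_ge_tangent[of "e 1" et] he[of 1] het
    unfolding a_def b_def by (simp add: mult.commute)
  then have "(a - b * e 1) * Y 1 \<le> Y 1 * (1 - bin_entropy (e 1))"
    using hY[of 1] by (simp add: mult.commute mult_left_mono)
  with decoy_state_bound[OF hn hmn \<open>0 \<le> a\<close> \<open>a \<le> b\<close> hcond[folded a_def b_def] _ he he0 DS1 DS2 DS3 DS4] hY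
  show ?thesis unfolding Let_def a_def[symmetric] b_def[symmetric] by fastforce
qed

end
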